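(* Let $V$ be a real Hilbert space, $V_{\mathcal T}\subset V$ a finite-dimensional subspace, and let $a,a_\delta:V\times V\to\mathbb R$, $a_{\mathcal T}:V_{\mathcal T}\times V_{\mathcal T}\to\mathbb R$, $f\in V^*$, $f_{\mathcal T}$ a linear functional on $V_{\mathcal T}$, and $j:V\to\mathbb R$ be as described in the context. Let $u,z\in V$ satisfy $$a(u;v)+a_\delta(u;v)=\langle f,v\rangle\quad\forall v\in V,$$ $$a'(u;w,z)+a_\delta'(u;w,z)=j'(u;w)\quad\forall w\in V.$$ Let $u_{\mathcal T m},z_{\mathcal T m}\in V_{\mathcal T}$ satisfy $$a_{\mathcal T}(u_{\mathcal T m};v)=\langle f_{\mathcal T},v\rangle\quad\forall v\in V_{\mathcal T},$$ $$a'(u_{\mathcal T m};w,z_{\mathcal T m})=j'(u_{\mathcal T m};w)\quad\forall w\in V_{\mathcal T}.$$ Let $i_{\mathcal T}:V\to V_{\mathcal T}$ be any map (an interpolation operator). Put $$e=(e_u,e_z):=(u-u_{\mathcal T m},\,z-z_{\mathcal T m}),\qquad x:=(u,z),\qquad x_{\mathcal T m}:=(u_{\mathcal T m},z_{\mathcal T m}).$$ Assume the differentiability hypotheses stated in the context. Then $$\begin{aligned} j(u)-j(u_{\mathcal T m}) ={}& -a_\delta(u_{\mathcal T m};z_{\mathcal T m})\\ &+\langle f,z_{\mathcal T m}\rangle-\langle f_{\mathcal T},z_{\mathcal T m}\rangle-a(u_{\mathcal T m};z_{\mathcal T m})+a_{\mathcal T}(u_{\mathcal T m};z_{\mathcal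 T m})\\ &+\tfrac12\big[\varrho(u_{\mathcal T m};z-i_{\mathcal T}z)+\varrho^*(u_{\mathcal T m};z_{\mathcal T m},u-i_{\mathcal T}u)\big]\\ &-\tfrac12\big[a_\delta(u_{\mathcal T m};e_z)+a_\delta'(u_{\mathcal T m};e_u,z_{\mathcal T m})\big]\\ &-\tfrac12\varrho(u_{\mathcal T m};z_{\mathcal T m}-i_{\mathcal T}z)-\tfrac12 R, \end{aligned}$$ where $$R:=\int_0^1\sigma(1-\sigma)\,L'''(x_{\mathcal T m}+\sigma e;e,e,e)\,d\sigma .$$
   Context: Setting and data: - $V$ is a real Hilbert space, $V_{\mathcal T}\subset V$ is a finite-dimensional subspace, and $X:=V\times V$. - $a,a_\delta:V\times V\to\mathbb R$ are linear in the second argument and possibly nonlinear in the first. The value $a(w;v)$ denotes $a$ evaluated at $(w,v)$, and similarly for $a_\delta$. - $f\in V^*$, with $\langle f,v\rangle$ its value at $v$. - $j:V\to\mathbb R$ is an output functional. - $a_{\mathcal T}:V_{\mathcal T}\times V_{\mathcal T}\to\mathbb R$ is linear in the second argument. It need not equal the restriction of $a$. - $f_{\mathcal T}$ is a linear functional on $V_{\mathcal T}$. It need not equal the restriction of $f$. Derivatives: - $a'(u;w,v):=\lim_{\epsilon\to0}\epsilon^{-1}[a(u+\epsilon w;v)-a(u;v)]$ denotes the Gâteaux (directional) derivative in the first argument. It is assumed to exist and be linear in $w$ and $v$. - $a_\delta'$ and $j'(u;w)$ are defined analogously and satisfy the same assumptions. The functional $L$: on $X$ define $$L(x):=j(u)+\langle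 f,z\rangle-a(u;z)-a_\delta(u;z),\qquad x=(u,z).$$ Its directional derivative at $x$ in direction $y=(w,v)\in X$ is $$L'(x;y)=j'(u;w)-a'(u;w,z)-a_\delta'(u;w,z)+\langle f,v\rangle-a(u;v)-a_\delta(u;v).$$ Residuals: for $v,w\in V$, $$\varrho(u_{\mathcal T m};v):=\langle f,v\rangle-a(u_{\mathcal T m};v),$$ $$\varrho^*(u_{\mathcal T m};z_{\mathcal T m},w):=j'(u_{\mathcal T m};w)-a'(u_{\mathcal T m};w,z_{\mathcal T m}).$$ Differentiability hypothesis: the function $\varphi(\sigma):=L(x_{\mathcal T m}+\sigma e)$ is three times continuously differentiable on $[0,1]$, with $\varphi'(\sigma)=L'(x_{\mathcal T m}+\sigma e;e)$. We write $L'''(x_{\mathcal T m}+\sigma e;e,e,e):=\varphi'''(\sigma)$. *)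

theory Defs
  imports "HOL-Analysis.Analysis"
begin

definition is_gateaux_form ::
  "('v::real_normed_vector \<Rightarrow> 'v \<Rightarrow> real) \<Rightarrow> ('v \<Rightarrow> 'v \<Rightarrow> 'v \<Rightarrow> real) \<Rightarrow> bool" where
  "is_gateaux_form a ap \<longleftrightarrow>
     (\<forall>u w v. ((\<lambda>\<epsilon>. (a (u + \<epsilon> *\<^sub>R w) v - a u v) / \<epsilon>) \<longlongrightarrow> ap u w v) (at 0))"

definition is_gateaux_fun ::
  "('v::real_normed_vector \<Rightarrow> real) \<Rightarrow> ('v \<Rightarrow> 'v \<Rightarrow> real) \<Rightarrow> bool" where
  "is_gateaux_fun j jp \<longleftrightarrow>
     (\<forall>u w. ((\<lambda>\<epsilon>. (j (u + \<epsilon> *\<^sub>R w) - j u) / \<epsilon>) \<longlongrightarrow> jp u w) (at 0))"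

text \<open>Linearity on a subspace (for forms defined only on V_T).\<close>
definition linear_on_sub :: "'v::real_vector set \<Rightarrow> ('v \<Rightarrow> real) \<Rightarrow> bool" where
  "linear_on_sub S g \<longleftrightarrow>
     (\<forall>x\<in>S. \<forall>y\<in>S. g (x + y) = g x + g y) \<and> (\<forall>c. \<forall>x\<in>S. g (c *\<^sub>R x) = c * g x)"

definition Lfun ::
  "('v \<Rightarrow> real) \<Rightarrow> ('v \<Rightarrow> real) \<Rightarrow> ('v \<Rightarrow> 'v \<Rightarrow> real) \<Rightarrow> ('v \<Rightarrow> 'v \<Rightarrow> real)
    \<Rightarrow> 'v \<times> 'v \<Rightarrow> real" where
  "Lfun j f a ad x = j (fst x) + f (snd x) - a (fst x) (snd x) - ad (fst x) (snd x)"

definition Lder ::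
  "('v \<Rightarrow> 'v \<Rightarrow> real) \<Rightarrow> ('v \<Rightarrow> real) \<Rightarrow> ('v \<Rightarrow> 'v \<Rightarrow> real) \<Rightarrow> ('v \<Rightarrow> 'v \<Rightarrow> 'v \<Rightarrow> real)
    \<Rightarrow> ('v \<Rightarrow> 'v \<Rightarrow> real) \<Rightarrow> ('v \<Rightarrow> 'v \<Rightarrow> 'v \<Rightarrow> real) \<Rightarrow> 'v \<times> 'v \<Rightarrow> 'v \<times> 'v \<Rightarrow> real" where
  "Lder jp f a ap ad adp x y =
     jp (fst x) (fst y) - ap (fst x) (fst y) (snd x) - adp (fst x) (fst y) (snd x)
     + f (snd y) - a (fst x) (snd y) - ad (fst x) (snd y)"

definition rho :: "('v \<Rightarrow> real) \<Rightarrow> ('v \<Rightarrow> 'v \<Rightarrow> real) \<Rightarrow> 'v \<Rightarrow> 'v \<Rightarrow> real" where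
  "rho f a uh v = f v - a uh v"

definition rho_star :: "('v \<Rightarrow> 'v \<Rightarrow> real) \<Rightarrow> ('v \<Rightarrow> 'v \<Rightarrow> 'v \<Rightarrow> real) \<Rightarrow> 'v \<Rightarrow> 'v \<Rightarrow> 'v \<Rightarrow> real" where
  "rho_star jp ap uh zh w = jp uh w - ap uh w zh"

end

theory Submission
  imports Defs
begin

(* Along the segment
   sigma -> x_Tm + sigma e from the discrete pair x_Tm = (u_Tm, z_Tm) to the
   exact pair x = (u, z), the trapezoidal rule with its exact remainder gives
     L(x) - L(x_Tm) = (L'(x_Tm; e) + L'(x; e)) / 2 - R / 2,
   where R is the integral of sigma (1 - sigma) times the third derivative.
   Because (u, z) solves the primal and dual problems, L(x) = j(u) and
   L'(x; e) = 0.  The derivative L'(x_Tm; e) is written in residual form and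
   the residuals are localised with the interpolant i_T: the dual residual
   vanishes on V_T by the discrete dual problem, and the primal residual is
   linear.  Finally the discrete primal equation a_T(u_Tm; z_Tm) = f_T(z_Tm)
   is inserted. *)

(* Trapezoidal rule on [0,1] with exact remainder: an antiderivative of
   s (1 - s) phi''' is -2 phi + (2 s - 1) phi' + s (1 - s) phi''. *)
lemma trapezoidal_rule_error:
  fixes \<phi> d \<phi>2 \<phi>3 :: "real \<Rightarrow> real"
  assumes d1: "\<And>s. s \<in> {0..1} \<Longrightarrow> (\<phi> has_real_derivative d s) (at s within {0..1})"
    and d2: "\<And>s. s \<in> {0..1} \<Longrightarrow> (d has_real_derivative \<phi>2 s) (at s within {0..1})"
    and d3: "\<And>s. s \<in> {0..1} \<Longrightarrow> (\<phi>2 has_real_derivative \<phi>3 s) (at s within {0..1})"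
  shows "\<phi> 1 - \<phi> 0
           = (d 0 + d 1) / 2 - (1/2) * integral {0..1} (\<lambda>\<sigma>. \<sigma> * (1 - \<sigma>) * \<phi>3 \<sigma>)"
proof -
  define K where "K s = - 2 * \<phi> s + (2 * s - 1) * d s + s * (1 - s) * \<phi>2 s" for s
  have "(K has_real_derivative s * (1 - s) * \<phi>3 s) (at s within {0..1})" if "s \<in> {0..1}" for s
    unfolding K_def
    by (rule derivative_eq_intros d1 d2 d3 that refl | simp add: algebra_simps)+
  then have "((\<lambda>s. s * (1 - s) * \<phi>3 s) has_integral K 1 - K 0) {0..1}"
    by (intro fundamental_theorem_of_calculus)
      (auto simp: has_real_derivative_iff_has_vector_derivative)
  then have "integral {0..1} (\<lambda>\<sigma>. \<sigma> * (1 - \<sigma>) * \<phi>3 \<sigma>) = K 1 - K 0"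
    by (rule integral_unique)
  then show ?thesis by (simp add: K_def field_simps)
qed

lemma Lfun_at_primal_solution:
  assumes "a u z + ad u z = f z"
  shows "Lfun j f a ad (u, z) = j u"
  using assms by (simp add: Lfun_def)

lemma Lder_at_solution:
  assumes "\<And>v. a u v + ad u v = f v"
    and "\<And>w. ap u w z + adp u w z = jp u w"
  shows "Lder jp f a ap ad adp (u, z) (w, v) = 0"
  using assms(1)[of v] assms(2)[of w] by (simp add: Lder_def)

lemma Lder_residual_form:
  "Lder jp f a ap ad adp (uh, zh) (w, v)
     = rho_star jp ap uh zh w - adp uh w zh + rho f a uh v - ad uh v"
  by (simp add: Lder_def rho_def rho_star_def)

lemma rho_diff:
  assumes "linear f" and "linear (a uh)"
  shows "rho f a uh (v - v') = rho f a uh v - rho f a uh v'"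
  using linear_diff[OF assms(1)] linear_diff[OF assms(2)] by (simp add: rho_def)

(* Galerkin orthogonality of the dual residual: it is linear and vanishes on
   V_T, so it only depends on its argument modulo V_T. *)
lemma rho_star_mod_subspace:
  assumes jp_lin: "linear (jp uh)" and ap_lin: "linear (\<lambda>w. ap uh w zh)"
    and orth: "\<And>w. w \<in> VT \<Longrightarrow> ap uh w zh = jp uh w"
    and diff_in: "w - w' \<in> VT"
  shows "rho_star jp ap uh zh w = rho_star jp ap uh zh w'"
proof -
  have split: "w = w' + (w - w')" by simp
  have "jp uh w = jp uh w' + jp uh (w - w')"
    by (subst split, rule linear_add[OF jp_lin])
  moreover have "ap uh w zh = ap uh w' zh + ap uh (w - w') zh"
    by (subst split, rule linear_add[OF ap_lin, simplified])
  ultimately show ?thesis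
    using orth[OF diff_in] by (simp add: rho_star_def)
qed

theorem mainTheorem1:
  fixes VT :: "'v::{real_inner, complete_space} set"
    and a ad :: "'v \<Rightarrow> 'v \<Rightarrow> real"
    and ap adp :: "'v \<Rightarrow> 'v \<Rightarrow> 'v \<Rightarrow> real"
    and aT :: "'v \<Rightarrow> 'v \<Rightarrow> real"
    and f fT :: "'v \<Rightarrow> real"
    and j :: "'v \<Rightarrow> real"
    and jp :: "'v \<Rightarrow> 'v \<Rightarrow> real"
    and u z uTm zTm :: 'v
    and iT :: "'v \<Rightarrow> 'v"
    and phi2 phi3 :: "real \<Rightarrow> real"
  assumes VT_sub: "subspace VT"
    and VT_fin: "\<exists>B. finite B \<and> VT = span B"
    and a_lin: "\<And>w. linear (a w)"
    and ad_lin: "\<And>w. linear (ad w)"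
    and aT_lin: "\<And>w. w \<in> VT \<Longrightarrow> linear_on_sub VT (aT w)"
    and f_dual: "bounded_linear f"
    and fT_lin: "linear_on_sub VT fT"
    and ap_deriv: "is_gateaux_form a ap"
    and ap_lin1: "\<And>u v. linear (\<lambda>w. ap u w v)"
    and ap_lin2: "\<And>u w. linear (\<lambda>v. ap u w v)"
    and adp_deriv: "is_gateaux_form ad adp"
    and adp_lin1: "\<And>u v. linear (\<lambda>w. adp u w v)"
    and adp_lin2: "\<And>u w. linear (\<lambda>v. adp u w v)"
    and jp_deriv: "is_gateaux_fun j jp"
    and jp_lin: "\<And>u. linear (jp u)"
    and primal: "\<And>v. a u v + ad u v = f v"
    and dual: "\<And>w. ap u w z + adp u w z = jp u w"
    and uTm_in: "uTm \<in> VT" and zTm_in: "zTm \<in> VT"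
    and primal_h: "\<And>v. v \<in> VT \<Longrightarrow> aT uTm v = fT v"
    and dual_h: "\<And>w. w \<in> VT \<Longrightarrow> ap uTm w zTm = jp uTm w"
    and iT_into: "\<And>v. iT v \<in> VT"
    and phi_d1: "\<And>\<sigma>. \<sigma> \<in> {0..1} \<Longrightarrow>
       ((\<lambda>s. Lfun j f a ad ((uTm, zTm) + s *\<^sub>R (u - uTm, z - zTm)))
          has_real_derivative
        Lder jp f a ap ad adp ((uTm, zTm) + \<sigma> *\<^sub>R (u - uTm, z - zTm)) (u - uTm, z - zTm))
       (at \<sigma> within {0..1})"
    and phi_d2: "\<And>\<sigma>. \<sigma> \<in> {0..1} \<Longrightarrow>
       ((\<lambda>s. Lder jp f a ap ad adp ((uTm, zTm) + s *\<^sub>R (u - uTm, z - zTm)) (u - uTm, z - zTm))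
          has_real_derivative phi2 \<sigma>) (at \<sigma> within {0..1})"
    and phi_d3: "\<And>\<sigma>. \<sigma> \<in> {0..1} \<Longrightarrow> (phi2 has_real_derivative phi3 \<sigma>) (at \<sigma> within {0..1})"
    and phi3_cont: "continuous_on {0..1} phi3"
  shows "j u - j uTm =
      - ad uTm zTm
      + f zTm - fT zTm - a uTm zTm + aT uTm zTm
      + (1/2) * (rho f a uTm (z - iT z) + rho_star jp ap uTm zTm (u - iT u))
      - (1/2) * (ad uTm (z - zTm) + adp uTm (u - uTm) zTm)
      - (1/2) * rho f a uTm (zTm - iT z)
      - (1/2) * integral {0..1} (\<lambda>\<sigma>. \<sigma> * (1 - \<sigma>) * phi3 \<sigma>)"
proof -
  define e where "e = (u - uTm, z - zTm)"
  have trapezoid: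
    "Lfun j f a ad ((uTm, zTm) + 1 *\<^sub>R e) - Lfun j f a ad ((uTm, zTm) + 0 *\<^sub>R e)
      = (Lder jp f a ap ad adp ((uTm, zTm) + 0 *\<^sub>R e) e
         + Lder jp f a ap ad adp ((uTm, zTm) + 1 *\<^sub>R e) e) / 2
        - (1/2) * integral {0..1} (\<lambda>\<sigma>. \<sigma> * (1 - \<sigma>) * phi3 \<sigma>)"
    unfolding e_def by (rule trapezoidal_rule_error[OF phi_d1 phi_d2 phi_d3])
  have endpoints: "(uTm, zTm) + 0 *\<^sub>R e = (uTm, zTm)" "(uTm, zTm) + 1 *\<^sub>R e = (u, z)"
    by (simp_all add: e_def)
  have L_exact: "Lfun j f a ad (u, z) = j u"
    by (rule Lfun_at_primal_solution) (rule primal)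
  have L'_exact: "Lder jp f a ap ad adp (u, z) e = 0"
    unfolding e_def by (rule Lder_at_solution) (rule primal, rule dual)
  have dual_localised: "rho_star jp ap uTm zTm (u - uTm) = rho_star jp ap uTm zTm (u - iT u)"
  proof (rule rho_star_mod_subspace[where VT = VT])
    show "(u - uTm) - (u - iT u) \<in> VT"
      using VT_sub iT_into uTm_in by (simp add: subspace_diff)
  qed (use jp_lin ap_lin1 dual_h in auto)
  have primal_localised:
    "rho f a uTm (z - zTm) = rho f a uTm (z - iT z) - rho f a uTm (zTm - iT z)"
    using rho_diff[OF bounded_linear.linear[OF f_dual] a_lin, where v = "z - iT z" and v' = "zTm - iT z"]
    by simp
  show ?thesis
    using trapezoid primal_h[OF zTm_in] dual_localised primal_localised
    unfolding endpoints L_exact L'_exact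
    by (simp add: e_def Lder_residual_form Lfun_def algebra_simps)
qed

end
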